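(* Let $\mathcal M=(\mathcal L+\mathrm{diag}(p_1,\dots,p_n))\otimes I_m$ and suppose Assumptions A1 and A2 hold. Consider the estimator $\dot a_i=-\beta\,\mathrm{sgn}\big(\sum_{j\in\mathcal N_i}w_{ij}(a_i-a_j)+p_i(a_i-a_0)\big)$, $i=1,\dots,n$, with arbitrary initial values $a_i(t_0)\in\mathbb R^m$. Let $\bar a=\mathrm{col}(a_1-a_0,\dots,a_n-a_0)$ and $V_0=\frac12\bar a^T\mathcal M\bar a$. Then $a_i(t)=a_0(t)$ for all $i$ and all $t\ge T_f$, where $$T_f=t_0+\frac{\sqrt{2\lambda_{\max}(\mathcal M)V_0(t_0)}}{\lambda_{\min}(\mathcal M)\big(\beta-\sup_{t\ge t_0}\|\dot a_0(t)\|\big)}.$$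
   Context: Undirected graph on $\{1,\dots,n\}$ with symmetric weights $w_{ij}\ge0$, $w_{ii}=0$, neighbour sets $\mathcal N_i$; pinning weights $p_i\ge0$; Laplacian $\mathcal L$ with $l_{ii}=\sum_jw_{ij}$, $l_{ij}=-w_{ij}$. $a_0:[t_0,\infty)\to\mathbb R^m$ is continuously differentiable (leader acceleration). $\mathrm{sgn}(z)$ is the componentwise sign. Assumption A1: the leader has a directed path to every node (then $\mathcal M$ is symmetric positive definite). Assumption A2: $\sup_{t\ge t_0}\|\dot a_0(t)\|<\beta$, $\beta>0$. $\lambda_{\min},\lambda_{\max}$ denote extreme eigenvalues. *)

theory Defs
  imports "HOL-Analysis.Analysis"
begin

(* Nodes are the elements of a finite type 'n (playing the role of {1..n}),
   the state dimension m is CARD('m); vectors of R^m are real^'m. *)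

definition nbrs :: "('n \<Rightarrow> 'n \<Rightarrow> real) \<Rightarrow> 'n \<Rightarrow> 'n set" where
  "nbrs w i = {j. w i j > 0}"

definition laplacian :: "('n::finite \<Rightarrow> 'n \<Rightarrow> real) \<Rightarrow> 'n \<Rightarrow> 'n \<Rightarrow> real" where
  "laplacian w i j = (if i = j then (\<Sum>k\<in>UNIV. w i k) else - w i j)"

(* M = (L + diag(p)) \<otimes> I_m, indexed by pairs (node, component) *)
definition Mmat :: "('n::finite \<Rightarrow> 'n \<Rightarrow> real) \<Rightarrow> ('n \<Rightarrow> real)
                     \<Rightarrow> real^('n \<times> 'm::finite)^('n \<times> 'm)" where
  "Mmat w p = (\<chi> ik jl. (if snd ik = snd jl
                          then laplacian w (fst ik) (fst jl) + (if fst ik = fst jl then p (fst ik) else 0)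
                          else 0))"

definition eigenvalues :: "real^'k^'k \<Rightarrow> real set" where
  "eigenvalues A = {c. \<exists>v. v \<noteq> 0 \<and> A *v v = c *\<^sub>R v}"

definition lambda_min :: "real^'k^'k \<Rightarrow> real" where
  "lambda_min A = Min (eigenvalues A)"

definition lambda_max :: "real^'k^'k \<Rightarrow> real" where
  "lambda_max A = Max (eigenvalues A)"

(* Assumption A1: the leader (reaching node j directly iff p_j > 0) has a
   (directed) path to every node through edges with positive weight. *)
definition leader_reaches_all :: "('n \<Rightarrow> 'n \<Rightarrow> real) \<Rightarrow> ('n \<Rightarrow> real) \<Rightarrow> bool" where
  "leader_reaches_all w p =
     (\<forall>i. \<exists>j. p j > 0 \<and> (j, i) \<in> {(x, y). w x y > 0}\<^sup>*)"

(* set-valued sign (Filippov regularisation of sgn for a scalar) *)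
definition SGN :: "real \<Rightarrow> real set" where
  "SGN x = (if x = 0 then {-1..1} else {sgn x})"

definition est_arg :: "('n::finite \<Rightarrow> 'n \<Rightarrow> real) \<Rightarrow> ('n \<Rightarrow> real)
                        \<Rightarrow> ('n \<Rightarrow> real^'m) \<Rightarrow> real^'m \<Rightarrow> 'n \<Rightarrow> real^'m" where
  "est_arg w p x x0 i = (\<Sum>j\<in>nbrs w i. w i j *\<^sub>R (x i - x j)) + p i *\<^sub>R (x i - x0)"

(* Solution of  a_i' = - beta sgn(est_arg ...)  on [t0, oo) in the sense of
   differential inclusions (Filippov/Caratheodory): each a_i is absolutely
   continuous, i.e. the integral of a locally integrable v_i, and almost
   everywhere v_i(t) lies in - beta SGN(.) componentwise. *)
definition is_estimator_solution ::
  "('n::finite \<Rightarrow> 'n \<Rightarrow> real) \<Rightarrow> ('n \<Rightarrow> real) \<Rightarrow> real \<Rightarrow> real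
    \<Rightarrow> (real \<Rightarrow> real^'m::finite) \<Rightarrow> ('n \<Rightarrow> real \<Rightarrow> real^'m) \<Rightarrow> bool" where
  "is_estimator_solution w p \<beta> t0 a0 a =
     (\<exists>v :: 'n \<Rightarrow> real \<Rightarrow> real^'m. \<exists>N. negligible N \<and>
        (\<forall>i t. t \<ge> t0 \<longrightarrow> v i integrable_on {t0..t} \<and>
                a i t = a i t0 + integral {t0..t} (v i)) \<and>
        (\<forall>t \<in> {t0..} - N. \<forall>i k.
           v i t $ k \<in> (\<lambda>s. - \<beta> * s) ` SGN (est_arg w p (\<lambda>j. a j t) (a0 t) i $ k)))"

definition abar :: "('n::finite \<Rightarrow> real \<Rightarrow> real^'m::finite) \<Rightarrow> (real \<Rightarrow> real^'m) \<Rightarrow> real \<Rightarrow> real^('n \<times> 'm)" where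
  "abar a a0 t = (\<chi> ik. (a (fst ik) t - a0 t) $ snd ik)"

definition Vfun :: "('n::finite \<Rightarrow> 'n \<Rightarrow> real) \<Rightarrow> ('n \<Rightarrow> real)
                     \<Rightarrow> ('n \<Rightarrow> real \<Rightarrow> real^'m::finite) \<Rightarrow> (real \<Rightarrow> real^'m) \<Rightarrow> real \<Rightarrow> real" where
  "Vfun w p a a0 t = 1/2 * (abar a a0 t \<bullet> (Mmat w p *v abar a a0 t))"

end

theory Submission
  imports Defs
begin

text \<open>
  The stacked error abar is absolutely continuous with velocity U = col(v_i - a0'), where
  v_i \<in> -\<beta> sgn((M abar)_i) componentwise. Hence U \<bullet> M abar \<le> -(\<beta> - sup \<parallel>a0'\<parallel>) \<parallel>M abar\<parallel>, and with the
  Rayleigh bounds \<lambda>_min \<parallel>x\<parallel>^2 \<le> x \<bullet> M x \<le> \<lambda>_max \<parallel>x\<parallel>^2 (M is positive definite by A1) the Lyapunov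
  function V = abar \<bullet> M abar / 2 satisfies V' \<le> -\<kappa> sqrt V with \<kappa> = (\<beta> - sup \<parallel>a0'\<parallel>) \<lambda>_min sqrt (2 / \<lambda>_max).
  So sqrt V decreases at rate \<kappa>/2 and vanishes by time T_f.

  Since the solution is only an indefinite Henstock-Kurzweil integral, V is never differentiated:
  instead V t - V s is bounded by the decay term plus O((t - s)^2), and a function whose
  increments are O((t - s)^2) is nonincreasing.
\<close>

section \<open>Rayleigh bounds for symmetric matrices\<close>

lemma symmetric_matrix_inner_commute:
  fixes A :: "real^'k^'k"
  assumes "transpose A = A"
  shows "(A *v x) \<bullet> y = x \<bullet> (A *v y)"
  by (metis assms dot_lmul_matrix transpose_matrix_vector)

lemma quadratic_nonneg_imp_linear_coeff_zero:
  fixes b d :: real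
  assumes "d \<ge> 0" and "\<And>t. 0 \<le> 2 * t * b + t\<^sup>2 * d"
  shows "b = 0"
proof -
  define t where "t = - b / (d + 1)"
  have "t * (d + 1) = - b" using assms(1) by (simp add: t_def)
  moreover have "(d + 1)\<^sup>2 * (2 * t * b + t\<^sup>2 * d) = 2 * (t * (d + 1)) * b * (d + 1) + (t * (d + 1))\<^sup>2 * d"
    by (simp add: power2_eq_square algebra_simps)
  ultimately have "(d + 1)\<^sup>2 * (2 * t * b + t\<^sup>2 * d) = - b\<^sup>2 * (d + 2)"
    by (simp add: power2_eq_square algebra_simps)
  moreover have "0 \<le> (d + 1)\<^sup>2 * (2 * t * b + t\<^sup>2 * d)"
    using assms(2) by simp
  ultimately have "b\<^sup>2 * (d + 2) \<le> 0" by simp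
  with assms(1) show ?thesis by (simp add: mult_le_0_iff)
qed

text \<open>A minimiser x0 of the Rayleigh quotient is an eigenvector: the quotient cannot decrease
  to first order along the residual y = A x0 - \<nu> x0, and that first-order term is 2 (y \<bullet> y).\<close>

lemma rayleigh_minimiser_eigenvector:
  fixes A :: "real^'k^'k"
  assumes sym: "transpose A = A" and lower: "\<And>x. \<nu> * (x \<bullet> x) \<le> x \<bullet> (A *v x)"
    and x0x0: "x0 \<bullet> x0 = 1" and attained: "x0 \<bullet> (A *v x0) = \<nu>"
  shows "A *v x0 = \<nu> *\<^sub>R x0"
proof -
  let ?f = "\<lambda>x::real^'k. x \<bullet> (A *v x)"
  define y where "y = A *v x0 - \<nu> *\<^sub>R x0"
  have "y \<bullet> y = 0"
  proof (rule quadratic_nonneg_imp_linear_coeff_zero)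
    show "0 \<le> ?f y - \<nu> * (y \<bullet> y)" using lower[of y] by simp
    fix t
    have sym_x0y: "x0 \<bullet> (A *v y) = y \<bullet> (A *v x0)"
      using symmetric_matrix_inner_commute[OF sym, of y x0] by (simp add: inner_commute)
    have "?f (x0 + t *\<^sub>R y) = ?f x0 + 2 * t * (y \<bullet> (A *v x0)) + t\<^sup>2 * ?f y"
      using sym_x0y by (simp add: matrix_vector_right_distrib matrix_vector_mult_scaleR
          inner_add_left inner_add_right power2_eq_square algebra_simps)
    moreover have "y \<bullet> (A *v x0) = y \<bullet> y + \<nu> * (y \<bullet> x0)"
      by (simp add: y_def inner_diff_right inner_diff_left)
    moreover have "(x0 + t *\<^sub>R y) \<bullet> (x0 + t *\<^sub>R y) = 1 + 2 * t * (y \<bullet> x0) + t\<^sup>2 * (y \<bullet> y)"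
      using x0x0 by (simp add: inner_add_left inner_add_right inner_commute power2_eq_square algebra_simps)
    ultimately have "?f (x0 + t *\<^sub>R y) - \<nu> * ((x0 + t *\<^sub>R y) \<bullet> (x0 + t *\<^sub>R y))
          = 2 * t * (y \<bullet> y) + t\<^sup>2 * (?f y - \<nu> * (y \<bullet> y))"
      using x0x0 attained by (simp add: inner_commute[of x0 y] power2_eq_square algebra_simps)
    then show "0 \<le> 2 * t * (y \<bullet> y) + t\<^sup>2 * (?f y - \<nu> * (y \<bullet> y))"
      using lower[of "x0 + t *\<^sub>R y"] by simp
  qed
  then show ?thesis by (simp add: y_def)
qed

lemma eigenvalue_lower_bound_exists:
  fixes A :: "real^'k^'k"
  assumes sym: "transpose A = A"
  obtains \<nu> where "\<nu> \<in> eigenvalues A" and "\<And>x. \<nu> * (x \<bullet> x) \<le> x \<bullet> (A *v x)"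
proof -
  let ?f = "\<lambda>x::real^'k. x \<bullet> (A *v x)"
  have "continuous_on (sphere 0 1) ?f"
    by (intro continuous_intros linear_continuous_on matrix_vector_mul_bounded_linear)
  moreover have "sphere (0::real^'k) 1 \<noteq> {}" by simp
  ultimately obtain x0 where x0: "x0 \<in> sphere 0 1" and min: "\<And>y. y \<in> sphere 0 1 \<Longrightarrow> ?f x0 \<le> ?f y"
    using continuous_attains_inf[OF compact_sphere] by blast
  have x0x0: "x0 \<bullet> x0 = 1" using x0 by (simp add: dot_square_norm)
  have lower: "?f x0 * (x \<bullet> x) \<le> ?f x" for x
  proof (cases "x = 0")
    case False
    have "?f x0 \<le> ?f (x /\<^sub>R norm x)" using False by (intro min) simp
    also have "\<dots> = ?f x / (x \<bullet> x)"
      by (simp add: matrix_vector_mult_scaleR dot_square_norm power2_eq_square divide_inverse)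
    finally show ?thesis using False by (simp add: field_simps)
  qed simp
  have "A *v x0 = ?f x0 *\<^sub>R x0" by (rule rayleigh_minimiser_eigenvector[OF sym lower x0x0 refl])
  moreover have "x0 \<noteq> 0" using x0x0 by auto
  ultimately have "?f x0 \<in> eigenvalues A" by (auto simp: eigenvalues_def)
  then show ?thesis using lower by (rule that)
qed

lemma finite_eigenvalues_symmetric:
  fixes A :: "real^'k^'k"
  assumes sym: "transpose A = A"
  shows "finite (eigenvalues A)"
proof -
  define ev where "ev c = (SOME v. v \<noteq> 0 \<and> A *v v = c *\<^sub>R v)" for c
  have ev: "ev c \<noteq> 0 \<and> A *v ev c = c *\<^sub>R ev c" if "c \<in> eigenvalues A" for c
    using someI_ex[of "\<lambda>v. v \<noteq> 0 \<and> A *v v = c *\<^sub>R v"] that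
    unfolding ev_def eigenvalues_def by blast
  have inj: "inj_on ev (eigenvalues A)"
  proof (rule inj_onI)
    fix c d assume c: "c \<in> eigenvalues A" and d: "d \<in> eigenvalues A" and "ev c = ev d"
    then have "c *\<^sub>R ev c = d *\<^sub>R ev c" using ev by metis
    then show "c = d" using ev[OF c] by (simp add: scaleR_cancel_right)
  qed
  have "pairwise orthogonal (ev ` eigenvalues A)"
  proof (clarsimp simp: pairwise_def orthogonal_def)
    fix c d assume c: "c \<in> eigenvalues A" and d: "d \<in> eigenvalues A" and "ev c \<noteq> ev d"
    then have "c \<noteq> d" by auto
    have "c * (ev c \<bullet> ev d) = (A *v ev c) \<bullet> ev d" using ev[OF c] by simp
    also have "\<dots> = ev c \<bullet> (A *v ev d)" by (rule symmetric_matrix_inner_commute[OF sym])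
    also have "\<dots> = d * (ev c \<bullet> ev d)" using ev[OF d] by simp
    finally have "c * (ev c \<bullet> ev d) = d * (ev c \<bullet> ev d)" .
    then show "ev c \<bullet> ev d = 0" using \<open>c \<noteq> d\<close> by simp
  qed
  moreover have "0 \<notin> ev ` eigenvalues A" using ev by auto
  ultimately have "independent (ev ` eigenvalues A)"
    by (rule pairwise_orthogonal_independent)
  then have "finite (ev ` eigenvalues A)" by (rule independent_imp_finite)
  then show ?thesis using finite_imageD inj by blast
qed

lemma lambda_min_max_rayleigh:
  fixes A :: "real^'k^'k"
  assumes sym: "transpose A = A"
  shows "lambda_min A \<in> eigenvalues A"
    and "lambda_min A * (x \<bullet> x) \<le> x \<bullet> (A *v x)"
    and "x \<bullet> (A *v x) \<le> lambda_max A * (x \<bullet> x)"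
    and "lambda_min A \<le> lambda_max A"
proof -
  obtain \<nu> where \<nu>: "\<nu> \<in> eigenvalues A" and lower: "\<And>x. \<nu> * (x \<bullet> x) \<le> x \<bullet> (A *v x)"
    using eigenvalue_lower_bound_exists[OF sym] by blast
  have neg: "(- A) *v x = - (A *v x)" for x :: "real^'k"
    by (simp add: vec_eq_iff matrix_vector_mult_def sum_negf)
  have "transpose (- A) = - A" using sym by (simp add: vec_eq_iff transpose_def)
  then obtain \<mu>' where \<mu>': "\<mu>' \<in> eigenvalues (- A)"
    and upper': "\<And>x. \<mu>' * (x \<bullet> x) \<le> x \<bullet> ((- A) *v x)"
    using eigenvalue_lower_bound_exists by blast
  define \<mu> where "\<mu> = - \<mu>'"
  have \<mu>: "\<mu> \<in> eigenvalues A"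
  proof -
    obtain v where "v \<noteq> 0" and "(- A) *v v = \<mu>' *\<^sub>R v" using \<mu>' by (auto simp: eigenvalues_def)
    moreover from this(2) have "A *v v = \<mu> *\<^sub>R v" by (simp add: neg \<mu>_def) (metis minus_minus)
    ultimately show ?thesis by (auto simp: eigenvalues_def)
  qed
  have upper: "x \<bullet> (A *v x) \<le> \<mu> * (x \<bullet> x)" for x
    using upper'[of x] by (simp add: neg \<mu>_def)
  have between: "\<nu> \<le> c \<and> c \<le> \<mu>" if c: "c \<in> eigenvalues A" for c
  proof -
    obtain v where "v \<noteq> 0" and "A *v v = c *\<^sub>R v" using c by (auto simp: eigenvalues_def)
    then have "v \<bullet> (A *v v) = c * (v \<bullet> v)" and pos: "v \<bullet> v > 0" by simp_all
    then have "\<nu> * (v \<bullet> v) \<le> c * (v \<bullet> v)" and "c * (v \<bullet> v) \<le> \<mu> * (v \<bullet> v)"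
      using lower[of v] upper[of v] by simp_all
    then show ?thesis using pos by (meson mult_le_cancel_right_pos)
  qed
  have fin: "finite (eigenvalues A)" by (rule finite_eigenvalues_symmetric[OF sym])
  have "lambda_min A = \<nu>" unfolding lambda_min_def using fin \<nu> between by (intro Min_eqI) auto
  moreover have "lambda_max A = \<mu>" unfolding lambda_max_def using fin \<mu> between by (intro Max_eqI) auto
  ultimately show "lambda_min A \<in> eigenvalues A"
    and "lambda_min A * (x \<bullet> x) \<le> x \<bullet> (A *v x)"
    and "x \<bullet> (A *v x) \<le> lambda_max A * (x \<bullet> x)"
    and "lambda_min A \<le> lambda_max A"
    using \<nu> lower upper between by simp_all
qed

section \<open>The pinned Laplacian\<close>

lemma sum_UNIV_prod:
  "(\<Sum>z\<in>(UNIV :: ('a::finite \<times> 'b::finite) set). f z) = (\<Sum>i\<in>UNIV. \<Sum>k\<in>UNIV. f (i, k))"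
  by (simp add: sum.cartesian_product)

lemma Mmat_mult_nth:
  fixes w :: "'n::finite \<Rightarrow> 'n \<Rightarrow> real" and x :: "real^('n \<times> 'm::finite)"
  assumes w_diag: "\<And>i. w i i = 0"
  shows "(Mmat w p *v x) $ (i, k) = (\<Sum>j\<in>UNIV. w i j * (x $ (i, k) - x $ (j, k))) + p i * x $ (i, k)"
proof -
  have "(Mmat w p *v x) $ (i, k)
        = (\<Sum>j\<in>UNIV. \<Sum>l\<in>UNIV. (if k = l then laplacian w i j + (if i = j then p i else 0) else 0) * x $ (j, l))"
    unfolding matrix_vector_mult_def Mmat_def sum_UNIV_prod by (simp only: vec_lambda_beta fst_conv snd_conv)
  also have "\<dots> = (\<Sum>j\<in>UNIV. (laplacian w i j + (if i = j then p i else 0)) * x $ (j, k))"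
    by (simp add: if_distrib[of "\<lambda>z. z * _"] cong: if_cong)
  also have "\<dots> = (\<Sum>j\<in>UNIV. (if j = i then (\<Sum>l\<in>UNIV. w i l) * x $ (i, k) + p i * x $ (i, k) else 0) - w i j * x $ (j, k))"
    by (intro sum.cong) (auto simp: laplacian_def w_diag algebra_simps)
  also have "\<dots> = (\<Sum>j\<in>UNIV. w i j * (x $ (i, k) - x $ (j, k))) + p i * x $ (i, k)"
    by (simp add: sum_subtractf right_diff_distrib sum_distrib_right)
  finally show ?thesis .
qed

lemma Mmat_transpose:
  assumes w_sym: "\<And>i j. w i j = w j i"
  shows "transpose (Mmat w p :: real^('n::finite \<times> 'm::finite)^('n \<times> 'm)) = Mmat w p"
  using w_sym by (auto simp: vec_eq_iff transpose_def Mmat_def laplacian_def)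

lemma Mmat_abar_nth:
  fixes w :: "'n::finite \<Rightarrow> 'n \<Rightarrow> real" and a :: "'n \<Rightarrow> real \<Rightarrow> real^'m::finite"
  assumes w_diag: "\<And>i. w i i = 0" and w_nonneg: "\<And>i j. w i j \<ge> 0"
  shows "(Mmat w p *v abar a a0 t) $ (i, k) = est_arg w p (\<lambda>j. a j t) (a0 t) i $ k"
proof -
  have "(\<Sum>j\<in>nbrs w i. w i j *\<^sub>R (a i t - a j t)) = (\<Sum>j\<in>UNIV. w i j *\<^sub>R (a i t - a j t))"
    using w_nonneg by (intro sum.mono_neutral_left) (auto simp: nbrs_def less_le)
  then show ?thesis
    by (simp add: Mmat_mult_nth[OF w_diag] est_arg_def abar_def algebra_simps)
qed

lemma sum_weighted_diff_symmetric:
  fixes w :: "'n::finite \<Rightarrow> 'n \<Rightarrow> real" and y :: "'n \<Rightarrow> real"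
  assumes w_sym: "\<And>i j. w i j = w j i"
  shows "(\<Sum>i\<in>UNIV. \<Sum>j\<in>UNIV. w i j * (y i - y j) * y i) = (\<Sum>i\<in>UNIV. \<Sum>j\<in>UNIV. w i j * (y i - y j)\<^sup>2) / 2"
proof -
  let ?S = "\<Sum>i\<in>UNIV. \<Sum>j\<in>UNIV. w i j * (y i - y j) * y i"
  have "?S = (\<Sum>j\<in>UNIV. \<Sum>i\<in>UNIV. w i j * (y i - y j) * y i)" by (rule sum.swap)
  also have "\<dots> = (\<Sum>i\<in>UNIV. \<Sum>j\<in>UNIV. - (w i j * (y i - y j) * y j))"
    by (intro sum.cong refl) (simp add: w_sym algebra_simps)
  finally have "2 * ?S = ?S + (\<Sum>i\<in>UNIV. \<Sum>j\<in>UNIV. - (w i j * (y i - y j) * y j))" by simp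
  also have "\<dots> = (\<Sum>i\<in>UNIV. \<Sum>j\<in>UNIV. w i j * (y i - y j)\<^sup>2)"
    by (simp add: sum.distrib[symmetric] power2_eq_square algebra_simps)
  finally show ?thesis by simp
qed

lemma Mmat_quadratic_form:
  fixes w :: "'n::finite \<Rightarrow> 'n \<Rightarrow> real" and x :: "real^('n \<times> 'm::finite)"
  assumes w_diag: "\<And>i. w i i = 0" and w_sym: "\<And>i j. w i j = w j i"
  shows "x \<bullet> (Mmat w p *v x) = (\<Sum>k\<in>UNIV. (\<Sum>i\<in>UNIV. \<Sum>j\<in>UNIV. w i j * (x $ (i, k) - x $ (j, k))\<^sup>2) / 2
                                            + (\<Sum>i\<in>UNIV. p i * (x $ (i, k))\<^sup>2))"
proof -
  have "x \<bullet> (Mmat w p *v x)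
        = (\<Sum>k\<in>UNIV. \<Sum>i\<in>UNIV. x $ (i, k) * ((\<Sum>j\<in>UNIV. w i j * (x $ (i, k) - x $ (j, k))) + p i * x $ (i, k)))"
    by (subst sum.swap) (simp add: inner_vec_def sum_UNIV_prod Mmat_mult_nth[OF w_diag])
  also have "\<dots> = (\<Sum>k\<in>UNIV. (\<Sum>i\<in>UNIV. \<Sum>j\<in>UNIV. w i j * (x $ (i, k) - x $ (j, k)) * x $ (i, k))
                               + (\<Sum>i\<in>UNIV. p i * (x $ (i, k))\<^sup>2))"
    by (simp add: sum.distrib distrib_left sum_distrib_left power2_eq_square mult_ac)
  also have "\<dots> = (\<Sum>k\<in>UNIV. (\<Sum>i\<in>UNIV. \<Sum>j\<in>UNIV. w i j * (x $ (i, k) - x $ (j, k))\<^sup>2) / 2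
                               + (\<Sum>i\<in>UNIV. p i * (x $ (i, k))\<^sup>2))"
    by (simp add: sum_weighted_diff_symmetric[OF w_sym])
  finally show ?thesis .
qed

lemma Mmat_quadratic_form_nonpos:
  fixes w :: "'n::finite \<Rightarrow> 'n \<Rightarrow> real" and x :: "real^('n \<times> 'm::finite)"
  assumes w_diag: "\<And>i. w i i = 0" and w_sym: "\<And>i j. w i j = w j i"
    and w_nonneg: "\<And>i j. w i j \<ge> 0" and p_nonneg: "\<And>i. p i \<ge> 0"
    and nonpos: "x \<bullet> (Mmat w p *v x) \<le> 0"
  shows "\<And>i j k. w i j > 0 \<Longrightarrow> x $ (i, k) = x $ (j, k)"
    and "\<And>i k. p i > 0 \<Longrightarrow> x $ (i, k) = 0"
proof -
  define D where "D k = (\<Sum>i\<in>UNIV. \<Sum>j\<in>UNIV. w i j * (x $ (i, k) - x $ (j, k))\<^sup>2)" for k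
  define P where "P k = (\<Sum>i\<in>UNIV. p i * (x $ (i, k))\<^sup>2)" for k
  have D_nonneg: "D k \<ge> 0" and P_nonneg: "P k \<ge> 0" for k
    unfolding D_def P_def using w_nonneg p_nonneg by (auto intro!: sum_nonneg)
  have terms_nonneg: "0 \<le> D k / 2 + P k" for k
    using D_nonneg[of k] P_nonneg[of k] by simp
  have "(\<Sum>k\<in>UNIV. D k / 2 + P k) \<le> 0"
    using nonpos by (simp add: Mmat_quadratic_form[OF w_diag w_sym] D_def P_def)
  then have "(\<Sum>k\<in>UNIV. D k / 2 + P k) = 0"
    using terms_nonneg by (meson antisym sum_nonneg)
  then have terms_zero: "D k / 2 + P k = 0" for k
    using terms_nonneg by (simp add: sum_nonneg_eq_0_iff)
  have DP0: "D k = 0 \<and> P k = 0" for k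
    using terms_zero[of k] D_nonneg[of k] P_nonneg[of k] by (intro conjI; linarith)
  show "x $ (i, k) = x $ (j, k)" if "w i j > 0" for i j k
  proof -
    have "(\<Sum>j\<in>UNIV. w i j * (x $ (i, k) - x $ (j, k))\<^sup>2) = 0"
      using DP0[of k] w_nonneg by (simp add: D_def sum_nonneg_eq_0_iff sum_nonneg)
    then have "w i j * (x $ (i, k) - x $ (j, k))\<^sup>2 = 0"
      using w_nonneg by (simp add: sum_nonneg_eq_0_iff)
    then show ?thesis using that by simp
  qed
  show "x $ (i, k) = 0" if "p i > 0" for i k
  proof -
    have "p i * (x $ (i, k))\<^sup>2 = 0"
      using DP0[of k] p_nonneg by (simp add: P_def sum_nonneg_eq_0_iff)
    then show ?thesis using that by simp
  qed
qed

lemma Mmat_positive_definite: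
  fixes w :: "'n::finite \<Rightarrow> 'n \<Rightarrow> real" and x :: "real^('n \<times> 'm::finite)"
  assumes w_diag: "\<And>i. w i i = 0" and w_sym: "\<And>i j. w i j = w j i"
    and w_nonneg: "\<And>i j. w i j \<ge> 0" and p_nonneg: "\<And>i. p i \<ge> 0"
    and A1: "leader_reaches_all w p" and "x \<noteq> 0"
  shows "x \<bullet> (Mmat w p *v x) > 0"
proof (rule ccontr)
  assume "\<not> ?thesis"
  then have nonpos: "x \<bullet> (Mmat w p *v x) \<le> 0" by simp
  note zero = Mmat_quadratic_form_nonpos[OF w_diag w_sym w_nonneg p_nonneg nonpos]
  have "x $ (i, k) = 0" for i k
  proof -
    obtain j where "p j > 0" and "(j, i) \<in> {(x, y). w x y > 0}\<^sup>*"
      using A1 unfolding leader_reaches_all_def by blast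
    from this(2) show ?thesis
      by (induction rule: rtrancl_induct) (use zero \<open>p j > 0\<close> in auto)
  qed
  then show False using \<open>x \<noteq> 0\<close> by (simp add: vec_eq_iff)
qed

section \<open>Finite-time extinction of a Lyapunov function\<close>

lemma has_integral_le_const_ae:
  fixes f :: "real \<Rightarrow> real"
  assumes f: "(f has_integral i) {a..b}" and N: "negligible N" and "a \<le> b"
    and le: "\<And>x. x \<in> {a..b} - N \<Longrightarrow> f x \<le> K"
  shows "i \<le> K * (b - a)"
proof (rule has_integral_le)
  show "((\<lambda>x. if x \<in> N then K else f x) has_integral i) {a..b}"
    by (rule has_integral_spike[OF N _ f]) simp
  show "((\<lambda>x. K) has_integral K * (b - a)) {a..b}"
    using has_integral_const_real[of K a b] \<open>a \<le> b\<close> by (simp add: mult.commute)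
qed (use le in auto)

lemma has_integral_norm_le_ae:
  fixes f :: "real \<Rightarrow> 'a::real_normed_vector"
  assumes f: "(f has_integral i) {a..b}" and N: "negligible N" and "a \<le> b" and "0 \<le> B"
    and le: "\<And>x. x \<in> {a..b} - N \<Longrightarrow> norm (f x) \<le> B"
  shows "norm i \<le> B * (b - a)"
proof -
  have "((\<lambda>x. if x \<in> N then 0 else f x) has_integral i) (cbox a b)"
    by (rule has_integral_spike[OF N _ f[unfolded box_real(2)[symmetric]]]) simp
  from has_integral_bound[OF \<open>0 \<le> B\<close> this] show ?thesis
    using le \<open>0 \<le> B\<close> \<open>a \<le> b\<close> by auto
qed

text \<open>A substitute for "f' \<le> 0 implies f nonincreasing" that needs no derivative.\<close>

lemma le_if_increments_quadratic:
  fixes f :: "real \<Rightarrow> real"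
  assumes "a \<le> b" and "C \<ge> 0"
    and step: "\<And>x y. a \<le> x \<Longrightarrow> x \<le> y \<Longrightarrow> y \<le> b \<Longrightarrow> f y - f x \<le> C * (y - x)\<^sup>2"
  shows "f b \<le> f a"
proof -
  have fine: "f b - f a \<le> C * (b - a)\<^sup>2 / real n" if "n > 0" for n :: nat
  proof -
    define h where "h = (b - a) / real n"
    have h: "h \<ge> 0" "real n * h = b - a" using \<open>a \<le> b\<close> that by (simp_all add: h_def)
    define g where "g j = f (a + real j * h)" for j :: nat
    have "f b - f a = (\<Sum>j<n. g (Suc j) - g j)"
      by (simp only: sum_lessThan_telescope) (simp add: g_def h(2))
    also have "\<dots> \<le> (\<Sum>j<n. C * h\<^sup>2)"
    proof (rule sum_mono)
      fix j assume "j \<in> {..<n}"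
      then have "real (Suc j) * h \<le> real n * h" using h(1) by (intro mult_right_mono) auto
      then have "a + real (Suc j) * h \<le> b" using h(2) by simp
      moreover have "a \<le> a + real j * h" and "a + real j * h \<le> a + real (Suc j) * h"
        using h(1) by (simp_all add: algebra_simps)
      ultimately show "g (Suc j) - g j \<le> C * h\<^sup>2"
        using step[of "a + real j * h" "a + real (Suc j) * h"] by (simp add: g_def algebra_simps)
    qed
    also have "\<dots> = C * (b - a)\<^sup>2 / real n"
      using that by (simp add: h_def power2_eq_square)
    finally show ?thesis .
  qed
  show ?thesis
  proof (rule field_le_epsilon)
    fix e :: real assume "e > 0"
    obtain n :: nat where n: "C * (b - a)\<^sup>2 / e < real n" using reals_Archimedean2 by blast
    then have "n > 0" using \<open>C \<ge> 0\<close> \<open>e > 0\<close> by (metis divide_nonneg_pos of_nat_0_less_iff order_le_less_trans zero_le_mult_iff zero_le_power2)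
    then have "C * (b - a)\<^sup>2 / real n \<le> e" using n \<open>e > 0\<close> by (simp add: divide_le_eq divide_less_eq mult.commute)
    then show "f b \<le> f a + e" using fine[OF \<open>n > 0\<close>] by simp
  qed
qed

lemma sub_div_le_sqrt:
  fixes X Y V :: real
  assumes "X > 0" and "Y \<ge> 0" and "X\<^sup>2 - Y \<le> V" and "V \<ge> 0"
  shows "X - Y / X \<le> sqrt V"
proof (cases "X - Y / X \<le> 0")
  case False
  then have "Y < X\<^sup>2" using \<open>X > 0\<close> by (simp add: field_simps power2_eq_square)
  have "(X - Y / X)\<^sup>2 = X\<^sup>2 - 2 * Y + Y * (Y / X\<^sup>2)"
    using \<open>X > 0\<close> by (simp add: power2_eq_square field_simps)
  also have "Y * (Y / X\<^sup>2) \<le> Y"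
    using \<open>Y < X\<^sup>2\<close> \<open>Y \<ge> 0\<close> \<open>X > 0\<close> by (intro mult_left_le) simp_all
  finally have "(X - Y / X)\<^sup>2 \<le> V" using assms(3) by simp
  then show ?thesis using False by (simp add: real_le_rsqrt)
qed (use \<open>V \<ge> 0\<close> in \<open>meson order_trans real_sqrt_ge_zero\<close>)

lemma sqrt_decay_step:
  fixes u v h \<kappa> K \<sigma> :: real
  assumes "0 < \<sigma>" and "\<sigma> \<le> sqrt v" and "0 \<le> u" and "0 \<le> v" and "0 \<le> h" and "0 \<le> \<kappa>" and "0 \<le> K"
    and decay: "v - u \<le> - \<kappa> * sqrt v * h + K * h\<^sup>2"
  shows "(sqrt v + \<kappa> / 2 * h) - sqrt u \<le> ((\<kappa> / 2)\<^sup>2 + K) / \<sigma> * h\<^sup>2"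
proof -
  define X where "X = sqrt v + \<kappa> / 2 * h"
  define Y where "Y = ((\<kappa> / 2)\<^sup>2 + K) * h\<^sup>2"
  have "Y \<ge> 0" using \<open>0 \<le> K\<close> by (simp add: Y_def)
  have "0 \<le> \<kappa> / 2 * h" using \<open>0 \<le> h\<close> \<open>0 \<le> \<kappa>\<close> by simp
  then have "\<sigma> \<le> X" using \<open>\<sigma> \<le> sqrt v\<close> by (simp add: X_def)
  \<comment> \<open>Completing the square in the decay estimate.\<close>
  have "X\<^sup>2 - Y \<le> u"
    using decay \<open>0 \<le> v\<close> by (simp add: X_def Y_def power2_eq_square algebra_simps)
  then have "X - Y / X \<le> sqrt u"
    using \<open>0 < \<sigma>\<close> \<open>\<sigma> \<le> X\<close> \<open>Y \<ge> 0\<close> \<open>0 \<le> u\<close> by (intro sub_div_le_sqrt) simp_all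
  moreover have "Y / X \<le> Y / \<sigma>"
    using \<open>0 < \<sigma>\<close> \<open>\<sigma> \<le> X\<close> \<open>Y \<ge> 0\<close> by (simp add: divide_left_mono)
  ultimately show ?thesis by (simp add: X_def Y_def algebra_simps)
qed

lemma finite_time_extinction:
  fixes V :: "real \<Rightarrow> real"
  assumes V_nonneg: "\<And>t. t \<ge> t0 \<Longrightarrow> V t \<ge> 0" and "\<kappa> > 0" and "K \<ge> 0"
    and decay: "\<And>x y. t0 \<le> x \<Longrightarrow> x \<le> y \<Longrightarrow> V y - V x \<le> - \<kappa> * sqrt (V y) * (y - x) + K * (y - x)\<^sup>2"
    and T: "T \<ge> t0 + 2 * sqrt (V t0) / \<kappa>"
  shows "V T = 0"
proof (rule ccontr)
  assume "V T \<noteq> 0"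
  have "t0 \<le> T" using T \<open>\<kappa> > 0\<close> V_nonneg[of t0] by (smt (verit) divide_nonneg_pos real_sqrt_ge_zero)
  then have "V T > 0" using V_nonneg[of T] \<open>V T \<noteq> 0\<close> by simp
  have V_antimono: "V t \<le> V s" if "t0 \<le> s" "s \<le> t" for s t
  proof (rule le_if_increments_quadratic[OF that(2) \<open>K \<ge> 0\<close>])
    fix x y assume xy: "s \<le> x" "x \<le> y" "y \<le> t"
    moreover have "0 \<le> \<kappa> * sqrt (V y) * (y - x)"
      using \<open>\<kappa> > 0\<close> xy that V_nonneg[of y] by simp
    ultimately show "V y - V x \<le> K * (y - x)\<^sup>2"
      using decay[of x y] that by linarith
  qed
  define W where "W t = sqrt (V t)" for t
  define \<sigma> where "\<sigma> = W T"
  define k where "k = \<kappa> / 2"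
  have "\<sigma> > 0" "k > 0" using \<open>V T > 0\<close> \<open>\<kappa> > 0\<close> by (simp_all add: \<sigma>_def W_def k_def)
  \<comment> \<open>The quadratic error term of W = sqrt V needs W bounded below; V is nonincreasing, so W \<ge> W T > 0 on [t0, T].\<close>
  have W_step: "(W y + k * y) - (W x + k * x) \<le> (k\<^sup>2 + K) / \<sigma> * (y - x)\<^sup>2"
    if "t0 \<le> x" "x \<le> y" "y \<le> T" for x y
  proof -
    have "\<sigma> \<le> sqrt (V y)" using V_antimono[of y T] that by (simp add: \<sigma>_def W_def)
    then have "(sqrt (V y) + \<kappa> / 2 * (y - x)) - sqrt (V x) \<le> ((\<kappa> / 2)\<^sup>2 + K) / \<sigma> * (y - x)\<^sup>2"
      using \<open>\<sigma> > 0\<close> \<open>\<kappa> > 0\<close> \<open>K \<ge> 0\<close> V_nonneg[of x] V_nonneg[of y] that decay[of x y]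
      by (intro sqrt_decay_step) simp_all
    moreover have "(W y + k * y) - (W x + k * x) = (sqrt (V y) + \<kappa> / 2 * (y - x)) - sqrt (V x)"
      by (simp add: W_def k_def field_simps)
    ultimately show ?thesis by (simp add: k_def)
  qed
  have "W T + k * T \<le> W t0 + k * t0"
    using \<open>t0 \<le> T\<close> \<open>\<sigma> > 0\<close> \<open>K \<ge> 0\<close>
    by (intro le_if_increments_quadratic[where f = "\<lambda>t. W t + k * t" and C = "(k\<^sup>2 + K) / \<sigma>"] W_step)
      simp_all
  moreover have "W t0 \<le> k * (T - t0)"
    using T \<open>\<kappa> > 0\<close> by (simp add: W_def k_def field_simps)
  ultimately show False using \<open>\<sigma> > 0\<close> by (simp add: \<sigma>_def algebra_simps)
qed

lemma norm_midpoint_diff_le: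
  fixes x y z :: "'a::real_normed_vector"
  assumes "norm (x - z) \<le> \<delta>" and "norm (y - z) \<le> \<delta>"
  shows "norm (midpoint x y - z) \<le> \<delta>"
proof -
  have "midpoint x y - z = (1/2) *\<^sub>R (x - z) + (1/2) *\<^sub>R (y - z)"
    by (simp add: midpoint_def algebra_simps flip: scaleR_add_left)
  then have "norm (midpoint x y - z) \<le> (1/2) * norm (x - z) + (1/2) * norm (y - z)"
    by (metis norm_scaleR norm_triangle_ineq abs_of_pos half_gt_zero_iff zero_less_one)
  then show ?thesis using assms by linarith
qed

lemma quadratic_form_diff_midpoint:
  fixes M :: "real^'k^'k"
  assumes sym: "transpose M = M"
  shows "1/2 * (x \<bullet> (M *v x)) - 1/2 * (y \<bullet> (M *v y)) = (x - y) \<bullet> (M *v midpoint y x)"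
  using symmetric_matrix_inner_commute[OF sym, of y x]
  by (simp add: midpoint_def matrix_vector_mult_scaleR matrix_vector_right_distrib
      inner_diff_left inner_add_right inner_commute[of x "M *v y"] algebra_simps)

lemma norm_matrix_vector_ge:
  fixes M :: "real^'k^'k"
  assumes lower: "\<And>x. \<nu> * (x \<bullet> x) \<le> x \<bullet> (M *v x)"
  shows "\<nu> * norm x \<le> norm (M *v x)"
proof (cases "x = 0")
  case False
  have "(\<nu> * norm x) * norm x \<le> x \<bullet> (M *v x)"
    using lower[of x] by (simp add: dot_square_norm power2_eq_square mult.assoc)
  also have "\<dots> \<le> norm (M *v x) * norm x"
    using norm_cauchy_schwarz[of x "M *v x"] by (simp add: mult.commute)
  finally show ?thesis using False by simp
qed simp

lemma descent_near_point:
  fixes M :: "real^'k^'k"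
  assumes lower: "\<And>x. \<nu> * norm x \<le> norm (M *v x)" and upper: "\<And>x. norm (M *v x) \<le> Mb * norm x"
    and "c \<ge> 0" and "\<nu> \<ge> 0" and "Mb \<ge> 0"
    and descent: "u \<bullet> (M *v a) \<le> - c * norm (M *v a)" and "norm u \<le> L"
    and "norm (m - a) \<le> \<delta>" and "norm (b - a) \<le> \<delta>"
  shows "u \<bullet> (M *v m) \<le> - c * \<nu> * norm b + (c * \<nu> + L * Mb) * \<delta>"
proof -
  have "c * \<nu> * norm b \<le> c * (\<nu> * norm a) + c * \<nu> * \<delta>"
  proof -
    have "norm b \<le> norm a + \<delta>" using \<open>norm (b - a) \<le> \<delta>\<close> norm_triangle_ineq2[of b a] by linarith
    then have "(c * \<nu>) * norm b \<le> (c * \<nu>) * (norm a + \<delta>)"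
      using \<open>c \<ge> 0\<close> \<open>\<nu> \<ge> 0\<close> by (intro mult_left_mono) simp_all
    then show ?thesis by (simp add: algebra_simps)
  qed
  also have "c * (\<nu> * norm a) \<le> c * norm (M *v a)" using lower \<open>c \<ge> 0\<close> by (rule mult_left_mono)
  finally have near: "u \<bullet> (M *v a) \<le> - c * \<nu> * norm b + c * \<nu> * \<delta>" using descent by linarith
  have "u \<bullet> (M *v (m - a)) \<le> norm u * norm (M *v (m - a))" by (rule norm_cauchy_schwarz)
  also have "\<dots> \<le> L * (Mb * \<delta>)"
  proof (rule mult_mono)
    have "Mb * norm (m - a) \<le> Mb * \<delta>" using \<open>norm (m - a) \<le> \<delta>\<close> \<open>Mb \<ge> 0\<close> by (rule mult_left_mono)
    then show "norm (M *v (m - a)) \<le> Mb * \<delta>" using upper[of "m - a"] by linarith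
  qed (simp_all add: \<open>norm u \<le> L\<close> order_trans[OF norm_ge_zero \<open>norm u \<le> L\<close>])
  finally have "u \<bullet> (M *v (m - a)) \<le> L * Mb * \<delta>" by simp
  then show ?thesis
    using near by (simp add: matrix_vector_mult_diff_distrib inner_diff_right algebra_simps)
qed

lemma lyapunov_increment:
  fixes M :: "real^'k^'k" and A U :: "real \<Rightarrow> real^'k"
  assumes sym: "transpose M = M" and lower: "\<And>x. \<nu> * (x \<bullet> x) \<le> x \<bullet> (M *v x)"
    and "\<nu> \<ge> 0" and "c \<ge> 0" and N: "negligible N" and "L \<ge> 0"
    and deriv: "\<And>s t. t0 \<le> s \<Longrightarrow> s \<le> t \<Longrightarrow> (U has_integral (A t - A s)) {s..t}"
    and U_bound: "\<And>\<tau>. \<tau> \<ge> t0 \<Longrightarrow> \<tau> \<notin> N \<Longrightarrow> norm (U \<tau>) \<le> L"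
    and descent: "\<And>\<tau>. \<tau> \<ge> t0 \<Longrightarrow> \<tau> \<notin> N \<Longrightarrow> U \<tau> \<bullet> (M *v A \<tau>) \<le> - c * norm (M *v A \<tau>)"
  obtains K where "K \<ge> 0" and "\<And>s t. t0 \<le> s \<Longrightarrow> s \<le> t \<Longrightarrow>
      1/2 * (A t \<bullet> (M *v A t)) - 1/2 * (A s \<bullet> (M *v A s))
        \<le> - c * \<nu> * norm (A t) * (t - s) + K * (t - s)\<^sup>2"
proof -
  have lipschitz: "norm (A t - A s) \<le> L * (t - s)" if "t0 \<le> s" "s \<le> t" for s t
    by (rule has_integral_norm_le_ae[OF deriv[OF that] N that(2) \<open>L \<ge> 0\<close>]) (use U_bound that in auto)
  obtain Mb where "Mb > 0" and Mb: "\<And>x. norm (M *v x) \<le> norm x * Mb"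
    using bounded_linear.pos_bounded[OF matrix_vector_mul_bounded_linear[of M]] by blast
  define K where "K = (c * \<nu> + L * Mb) * L"
  have "K \<ge> 0" using \<open>c \<ge> 0\<close> \<open>\<nu> \<ge> 0\<close> \<open>L \<ge> 0\<close> \<open>Mb > 0\<close> by (simp add: K_def)
  moreover have "1/2 * (A t \<bullet> (M *v A t)) - 1/2 * (A s \<bullet> (M *v A s))
        \<le> - c * \<nu> * norm (A t) * (t - s) + K * (t - s)\<^sup>2" if "t0 \<le> s" "s \<le> t" for s t
  proof -
    \<comment> \<open>Tested against the midpoint, the increment of A gives that of the quadratic form exactly.\<close>
    define m where "m = midpoint (A s) (A t)"
    have integral: "((\<lambda>\<tau>. U \<tau> \<bullet> (M *v m)) has_integral (A t - A s) \<bullet> (M *v m)) {s..t}"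
      using has_integral_linear[OF deriv[OF that] bounded_linear_inner_left] by (simp add: o_def)
    have bound: "U \<tau> \<bullet> (M *v m) \<le> - c * \<nu> * norm (A t) + K * (t - s)" if \<tau>: "\<tau> \<in> {s..t} - N" for \<tau>
    proof -
      have "norm (A \<tau> - A s) \<le> L * (\<tau> - s)" "norm (A t - A \<tau>) \<le> L * (t - \<tau>)"
        using lipschitz \<tau> \<open>t0 \<le> s\<close> by auto
      moreover have "L * (\<tau> - s) \<le> L * (t - s)" "L * (t - \<tau>) \<le> L * (t - s)"
        using \<tau> \<open>L \<ge> 0\<close> by (simp_all add: mult_left_mono)
      ultimately have near_s: "norm (A s - A \<tau>) \<le> L * (t - s)" and near_t: "norm (A t - A \<tau>) \<le> L * (t - s)"
        by (simp_all add: norm_minus_commute)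
      have "U \<tau> \<bullet> (M *v m) \<le> - c * \<nu> * norm (A t) + (c * \<nu> + L * Mb) * (L * (t - s))"
      proof (rule descent_near_point)
        show "\<nu> * norm x \<le> norm (M *v x)" for x by (rule norm_matrix_vector_ge[OF lower])
        show "norm (M *v x) \<le> Mb * norm x" for x using Mb[of x] by (simp add: mult.commute)
        show "norm (m - A \<tau>) \<le> L * (t - s)"
          unfolding m_def using near_s near_t by (rule norm_midpoint_diff_le)
      qed (use \<open>c \<ge> 0\<close> \<open>\<nu> \<ge> 0\<close> \<open>Mb > 0\<close> descent U_bound \<tau> \<open>t0 \<le> s\<close> near_t in auto)
      then show ?thesis by (simp add: K_def mult.assoc)
    qed
    from has_integral_le_const_ae[OF integral N \<open>s \<le> t\<close> bound]
    show ?thesis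
      using quadratic_form_diff_midpoint[OF sym, of "A t" "A s"]
      by (simp add: m_def power2_eq_square algebra_simps)
  qed
  ultimately show ?thesis by (rule that)
qed

lemma lyapunov_finite_time:
  fixes M :: "real^'k^'k" and A U :: "real \<Rightarrow> real^'k"
  assumes sym: "transpose M = M"
    and lower: "\<And>x. \<nu> * (x \<bullet> x) \<le> x \<bullet> (M *v x)" and upper: "\<And>x. x \<bullet> (M *v x) \<le> \<mu> * (x \<bullet> x)"
    and "\<nu> > 0" and "\<nu> \<le> \<mu>" and "c > 0" and N: "negligible N" and "L \<ge> 0"
    and deriv: "\<And>s t. t0 \<le> s \<Longrightarrow> s \<le> t \<Longrightarrow> (U has_integral (A t - A s)) {s..t}"
    and U_bound: "\<And>\<tau>. \<tau> \<ge> t0 \<Longrightarrow> \<tau> \<notin> N \<Longrightarrow> norm (U \<tau>) \<le> L"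
    and descent: "\<And>\<tau>. \<tau> \<ge> t0 \<Longrightarrow> \<tau> \<notin> N \<Longrightarrow> U \<tau> \<bullet> (M *v A \<tau>) \<le> - c * norm (M *v A \<tau>)"
    and T: "T \<ge> t0 + sqrt (2 * \<mu> * (1/2 * (A t0 \<bullet> (M *v A t0)))) / (\<nu> * c)"
  shows "A T = 0"
proof -
  define V where "V t = 1/2 * (A t \<bullet> (M *v A t))" for t
  define \<kappa> where "\<kappa> = 2 * c * \<nu> / sqrt (2 * \<mu>)"
  obtain K where "K \<ge> 0" and increment: "\<And>s t. t0 \<le> s \<Longrightarrow> s \<le> t \<Longrightarrow>
      V t - V s \<le> - c * \<nu> * norm (A t) * (t - s) + K * (t - s)\<^sup>2"
    using lyapunov_increment[OF sym lower _ _ N \<open>L \<ge> 0\<close> deriv U_bound descent] \<open>\<nu> > 0\<close> \<open>c > 0\<close>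
    unfolding V_def by (metis less_imp_le)
  have "\<mu> > 0" "\<kappa> > 0" using \<open>\<nu> > 0\<close> \<open>\<nu> \<le> \<mu>\<close> \<open>c > 0\<close> by (simp_all add: \<kappa>_def)
  have lower_V: "\<nu> * (norm (A t))\<^sup>2 \<le> 2 * V t" for t
    using lower[of "A t"] by (simp add: V_def power2_norm_eq_inner)
  have V_nonneg: "V t \<ge> 0" for t
    using lower_V[of t] \<open>\<nu> > 0\<close> by (smt (verit) mult_nonneg_nonneg zero_le_power2)
  have rate: "\<kappa> * sqrt (V t) \<le> c * \<nu> * norm (A t)" for t
  proof -
    have "sqrt (4 * V t) \<le> sqrt (2 * \<mu> * (norm (A t))\<^sup>2)"
      using upper[of "A t"] by (simp add: V_def power2_norm_eq_inner)
    then have "2 * sqrt (V t) \<le> sqrt (2 * \<mu>) * norm (A t)"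
      by (simp add: real_sqrt_mult)
    then show ?thesis using \<open>\<mu> > 0\<close> \<open>c > 0\<close> \<open>\<nu> > 0\<close>
      by (simp add: \<kappa>_def field_simps)
  qed
  have "V T = 0"
  proof (rule finite_time_extinction[OF V_nonneg \<open>\<kappa> > 0\<close> \<open>K \<ge> 0\<close>])
    fix x y assume "t0 \<le> x" "x \<le> y"
    then have "\<kappa> * sqrt (V y) * (y - x) \<le> c * \<nu> * norm (A y) * (y - x)"
      using rate[of y] by (simp add: mult_right_mono)
    then show "V y - V x \<le> - \<kappa> * sqrt (V y) * (y - x) + K * (y - x)\<^sup>2"
      using increment[OF \<open>t0 \<le> x\<close> \<open>x \<le> y\<close>] by linarith
  next
    have "2 * sqrt (V t0) / \<kappa> = sqrt (2 * \<mu> * V t0) / (\<nu> * c)"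
      using \<open>c > 0\<close> \<open>\<nu> > 0\<close> by (simp add: \<kappa>_def real_sqrt_mult field_simps)
    then show "T \<ge> t0 + 2 * sqrt (V t0) / \<kappa>" using T by (simp add: V_def)
  qed
  then have "\<nu> * (norm (A T))\<^sup>2 \<le> 0" using lower_V[of T] by simp
  then show ?thesis using \<open>\<nu> > 0\<close> by (simp add: mult_le_0_iff)
qed

section \<open>The sign estimator\<close>

lemma indefinite_integral_increment:
  fixes f F :: "real \<Rightarrow> 'a::banach"
  assumes F: "\<And>t. t \<ge> t0 \<Longrightarrow> f integrable_on {t0..t} \<and> F t = F t0 + integral {t0..t} f"
    and "t0 \<le> s" and "s \<le> t"
  shows "(f has_integral (F t - F s)) {s..t}"
proof -
  have f: "f integrable_on {t0..t}" using F[of t] \<open>t0 \<le> s\<close> \<open>s \<le> t\<close> by simp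
  have "integral {t0..s} f + integral {s..t} f = integral {t0..t} f"
    by (rule Henstock_Kurzweil_Integration.integral_combine[OF \<open>t0 \<le> s\<close> \<open>s \<le> t\<close> f])
  moreover have "F t = F t0 + integral {t0..t} f" "F s = F t0 + integral {t0..s} f"
    using F[of t] F[of s] \<open>t0 \<le> s\<close> \<open>s \<le> t\<close> by simp_all
  moreover have "f integrable_on {s..t}"
    by (rule integrable_on_subinterval[OF f]) (use \<open>t0 \<le> s\<close> in auto)
  ultimately show ?thesis by (simp add: has_integral_iff algebra_simps)
qed

definition stack :: "('n::finite \<Rightarrow> real^'m::finite) \<Rightarrow> real^('n \<times> 'm)" where
  "stack x = (\<chi> z. x (fst z) $ snd z)"

lemma stack_nth [simp]: "stack x $ (i, k) = x i $ k"
  by (simp add: stack_def)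

lemma stack_diff: "stack x - stack y = stack (\<lambda>i. x i - y i)"
  by (simp add: vec_eq_iff stack_def)

lemma abar_eq_stack: "abar a a0 t = stack (\<lambda>i. a i t - a0 t)"
  by (simp add: abar_def stack_def)

lemma has_integral_stack:
  fixes g :: "'n::finite \<Rightarrow> real \<Rightarrow> real^'m::finite"
  assumes "\<And>i. (g i has_integral G i) S"
  shows "((\<lambda>\<tau>. stack (\<lambda>i. g i \<tau>)) has_integral stack G) S"
proof (rule has_integral_componentwise)
  fix b :: "real^('n \<times> 'm)" assume "b \<in> Basis"
  then obtain i k where b: "b = axis (i, k) 1" by (auto simp: Basis_vec_def)
  have "((\<lambda>\<tau>. g i \<tau> $ k) has_integral G i $ k) S"
    using has_integral_linear[OF assms bounded_linear_vec_nth] by (simp add: o_def)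
  then show "((\<lambda>\<tau>. stack (\<lambda>i. g i \<tau>) \<bullet> b) has_integral stack G \<bullet> b) S"
    by (simp add: b inner_axis)
qed

lemma SGN_mult_self: "\<sigma> \<in> SGN x \<Longrightarrow> \<bar>\<sigma>\<bar> \<le> 1 \<and> \<sigma> * x = \<bar>x\<bar>"
  unfolding SGN_def by (cases "x = 0") (auto simp: sgn_real_def)

lemma sign_feedback_norm_le:
  fixes u d :: "real^'k"
  assumes u: "\<And>z. u $ z \<in> (\<lambda>\<sigma>. - \<beta> * \<sigma>) ` SGN (s $ z)" and d: "\<And>z. \<bar>d $ z\<bar> \<le> S" and "\<beta> \<ge> 0"
  shows "norm (u - d) \<le> real CARD('k) * (\<beta> + S)"
proof -
  have "\<bar>(u - d) $ z\<bar> \<le> \<beta> + S" for z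
  proof -
    obtain \<sigma> where "\<sigma> \<in> SGN (s $ z)" and "u $ z = - \<beta> * \<sigma>" using u[of z] by blast
    then have "\<bar>u $ z\<bar> \<le> \<beta>" using SGN_mult_self \<open>\<beta> \<ge> 0\<close> by (simp add: abs_mult mult_left_le)
    then show ?thesis using d[of z] by simp
  qed
  then have "(\<Sum>z\<in>UNIV. \<bar>(u - d) $ z\<bar>) \<le> real CARD('k) * (\<beta> + S)"
    using sum_mono[of UNIV "\<lambda>z. \<bar>(u - d) $ z\<bar>" "\<lambda>_. \<beta> + S"] by simp
  then show ?thesis using norm_le_l1_cart[of "u - d"] by linarith
qed

lemma sign_feedback_descent:
  fixes u d s :: "real^'k"
  assumes u: "\<And>z. u $ z \<in> (\<lambda>\<sigma>. - \<beta> * \<sigma>) ` SGN (s $ z)" and d: "\<And>z. \<bar>d $ z\<bar> \<le> S" and "S \<le> \<beta>"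
  shows "(u - d) \<bullet> s \<le> - (\<beta> - S) * norm s"
proof -
  have "(u - d) $ z * s $ z \<le> - (\<beta> - S) * \<bar>s $ z\<bar>" for z
  proof -
    obtain \<sigma> where "\<sigma> \<in> SGN (s $ z)" and "u $ z = - \<beta> * \<sigma>" using u[of z] by blast
    then have "u $ z * s $ z = - \<beta> * \<bar>s $ z\<bar>" using SGN_mult_self by simp
    moreover have "- (d $ z * s $ z) \<le> \<bar>d $ z\<bar> * \<bar>s $ z\<bar>" by (simp add: abs_mult[symmetric])
    moreover have "\<bar>d $ z\<bar> * \<bar>s $ z\<bar> \<le> S * \<bar>s $ z\<bar>" using d[of z] by (rule mult_right_mono) simp
    ultimately show ?thesis by (simp add: left_diff_distrib)
  qed
  then have "(u - d) \<bullet> s \<le> (\<Sum>z\<in>UNIV. - (\<beta> - S) * \<bar>s $ z\<bar>)"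
    unfolding inner_vec_def inner_real_def by (intro sum_mono) simp
  also have "\<dots> = (S - \<beta>) * (\<Sum>z\<in>UNIV. \<bar>s $ z\<bar>)" by (simp add: sum_distrib_left)
  also have "\<dots> \<le> (S - \<beta>) * norm s"
    using norm_le_l1_cart[of s] \<open>S \<le> \<beta>\<close> by (intro mult_left_mono_neg) simp_all
  finally show ?thesis by simp
qed

lemma estimator_error_dynamics:
  fixes w :: "'n::finite \<Rightarrow> 'n \<Rightarrow> real" and a :: "'n \<Rightarrow> real \<Rightarrow> real^'m::finite"
  assumes w_nonneg: "\<And>i j. w i j \<ge> 0" and w_diag: "\<And>i. w i i = 0"
    and a0_deriv: "\<And>t. t \<ge> t0 \<Longrightarrow> (a0 has_vector_derivative a0' t) (at t within {t0..})"
    and a0'_le: "\<And>t. t \<ge> t0 \<Longrightarrow> norm (a0' t) \<le> S" and "0 \<le> S" and "S \<le> \<beta>"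
    and sol: "is_estimator_solution w p \<beta> t0 a0 a"
  obtains N U where "negligible N"
    and "\<And>s t. t0 \<le> s \<Longrightarrow> s \<le> t \<Longrightarrow> (U has_integral (abar a a0 t - abar a a0 s)) {s..t}"
    and "\<And>\<tau>. \<tau> \<ge> t0 \<Longrightarrow> \<tau> \<notin> N \<Longrightarrow> norm (U \<tau>) \<le> real CARD('n \<times> 'm) * (\<beta> + S)"
    and "\<And>\<tau>. \<tau> \<ge> t0 \<Longrightarrow> \<tau> \<notin> N \<Longrightarrow>
           U \<tau> \<bullet> (Mmat w p *v abar a a0 \<tau>) \<le> - (\<beta> - S) * norm (Mmat w p *v abar a a0 \<tau>)"
proof -
  obtain v :: "'n \<Rightarrow> real \<Rightarrow> real^'m" and N where "negligible N"
    and v_int: "\<forall>i t. t \<ge> t0 \<longrightarrow> v i integrable_on {t0..t} \<and> a i t = a i t0 + integral {t0..t} (v i)"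
    and v_sgn: "\<forall>t \<in> {t0..} - N. \<forall>i k.
                  v i t $ k \<in> (\<lambda>s. - \<beta> * s) ` SGN (est_arg w p (\<lambda>j. a j t) (a0 t) i $ k)"
    using sol unfolding is_estimator_solution_def by (elim exE conjE)
  define U where "U = (\<lambda>\<tau>. stack (\<lambda>i. v i \<tau> - a0' \<tau>))"
  have deriv: "(U has_integral (abar a a0 t - abar a a0 s)) {s..t}" if "t0 \<le> s" "s \<le> t" for s t
  proof -
    have leader: "(a0' has_integral (a0 t - a0 s)) {s..t}"
    proof (rule fundamental_theorem_of_calculus[OF \<open>s \<le> t\<close>])
      fix x assume "x \<in> {s..t}"
      with that have "(a0 has_vector_derivative a0' x) (at x within {t0..})" by (intro a0_deriv) simp
      then show "(a0 has_vector_derivative a0' x) (at x within {s..t})"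
        by (rule has_vector_derivative_within_subset) (use that in auto)
    qed
    have follower: "(v i has_integral (a i t - a i s)) {s..t}" for i
      by (rule indefinite_integral_increment[OF _ that]) (use v_int in blast)
    have node: "((\<lambda>\<tau>. v i \<tau> - a0' \<tau>) has_integral ((a i t - a0 t) - (a i s - a0 s))) {s..t}" for i
      using has_integral_diff[OF follower leader] by (simp add: algebra_simps)
    have "((\<lambda>\<tau>. stack (\<lambda>i. v i \<tau> - a0' \<tau>)) has_integral stack (\<lambda>i. (a i t - a0 t) - (a i s - a0 s))) {s..t}"
      by (rule has_integral_stack[OF node])
    then show ?thesis by (simp add: U_def abar_eq_stack stack_diff)
  qed
  have leader_bound: "\<bar>stack (\<lambda>i. a0' \<tau>) $ z\<bar> \<le> S" if "\<tau> \<ge> t0" for \<tau> z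
    using component_le_norm_cart[of "a0' \<tau>" "snd z"] a0'_le[OF that] by (cases z) simp
  have sign: "stack (\<lambda>i. v i \<tau>) $ z \<in> (\<lambda>\<sigma>. - \<beta> * \<sigma>) ` SGN ((Mmat w p *v abar a a0 \<tau>) $ z)"
    if "\<tau> \<ge> t0" "\<tau> \<notin> N" for \<tau> z
    using v_sgn that by (cases z) (simp add: Mmat_abar_nth[OF w_diag w_nonneg])
  show ?thesis
  proof (rule that[OF \<open>negligible N\<close> deriv])
    fix \<tau> assume "\<tau> \<ge> t0" "\<tau> \<notin> N"
    show "norm (U \<tau>) \<le> real CARD('n \<times> 'm) * (\<beta> + S)"
      unfolding U_def stack_diff[symmetric] using \<open>0 \<le> S\<close> \<open>S \<le> \<beta>\<close>
      by (intro sign_feedback_norm_le[OF sign leader_bound]) (use \<open>\<tau> \<ge> t0\<close> \<open>\<tau> \<notin> N\<close> in auto)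
    show "U \<tau> \<bullet> (Mmat w p *v abar a a0 \<tau>) \<le> - (\<beta> - S) * norm (Mmat w p *v abar a a0 \<tau>)"
      unfolding U_def stack_diff[symmetric]
      by (intro sign_feedback_descent[OF sign leader_bound \<open>S \<le> \<beta>\<close>]) (use \<open>\<tau> \<ge> t0\<close> \<open>\<tau> \<notin> N\<close> in auto)
  qed
qed

lemma lambda_min_Mmat_pos:
  fixes w :: "'n::finite \<Rightarrow> 'n \<Rightarrow> real"
  assumes w_diag: "\<And>i. w i i = 0" and w_sym: "\<And>i j. w i j = w j i"
    and w_nonneg: "\<And>i j. w i j \<ge> 0" and p_nonneg: "\<And>i. p i \<ge> 0"
    and A1: "leader_reaches_all w p"
  shows "lambda_min (Mmat w p :: real^('n \<times> 'm::finite)^('n \<times> 'm)) > 0"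
proof -
  let ?M = "Mmat w p :: real^('n \<times> 'm)^('n \<times> 'm)"
  have "transpose ?M = ?M" by (rule Mmat_transpose[OF w_sym])
  then obtain x where "x \<noteq> 0" and "?M *v x = lambda_min ?M *\<^sub>R x"
    using lambda_min_max_rayleigh(1) by (auto simp: eigenvalues_def)
  moreover have "x \<bullet> (?M *v x) > 0"
    by (rule Mmat_positive_definite[OF w_diag w_sym w_nonneg p_nonneg A1 \<open>x \<noteq> 0\<close>])
  ultimately show ?thesis using inner_ge_zero[of x] by (auto simp: zero_less_mult_iff)
qed

lemma estimator_finite_time_convergence:
  fixes w :: "'n::finite \<Rightarrow> 'n \<Rightarrow> real" and a0 a0' :: "real \<Rightarrow> real^'m::finite"
    and a :: "'n \<Rightarrow> real \<Rightarrow> real^'m"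
  assumes w_sym: "\<And>i j. w i j = w j i" and w_nonneg: "\<And>i j. w i j \<ge> 0"
    and w_diag: "\<And>i. w i i = 0" and p_nonneg: "\<And>i. p i \<ge> 0"
    and a0_deriv: "\<And>t. t \<ge> t0 \<Longrightarrow> (a0 has_vector_derivative a0' t) (at t within {t0..})"
    and A1: "leader_reaches_all w p"
    and a0'_le: "\<And>t. t \<ge> t0 \<Longrightarrow> norm (a0' t) \<le> S" and "S < \<beta>"
    and sol: "is_estimator_solution w p \<beta> t0 a0 a"
  shows "\<forall>t \<ge> t0 + sqrt (2 * lambda_max (Mmat w p :: real^('n \<times> 'm)^('n \<times> 'm)) * Vfun w p a a0 t0)
                    / (lambda_min (Mmat w p :: real^('n \<times> 'm)^('n \<times> 'm)) * (\<beta> - S)).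
           \<forall>i. a i t = a0 t"
proof (intro allI impI)
  fix T i
  assume T: "T \<ge> t0 + sqrt (2 * lambda_max (Mmat w p :: real^('n \<times> 'm)^('n \<times> 'm)) * Vfun w p a a0 t0)
                    / (lambda_min (Mmat w p :: real^('n \<times> 'm)^('n \<times> 'm)) * (\<beta> - S))"
  define M where "M = (Mmat w p :: real^('n \<times> 'm)^('n \<times> 'm))"
  have sym: "transpose M = M" unfolding M_def by (rule Mmat_transpose[OF w_sym])
  note rayleigh = lambda_min_max_rayleigh[OF sym]
  have "0 \<le> S" using a0'_le[of t0] norm_ge_zero[of "a0' t0"] by linarith
  obtain N U where N: "negligible N"
    and deriv: "\<And>s t. t0 \<le> s \<Longrightarrow> s \<le> t \<Longrightarrow> (U has_integral (abar a a0 t - abar a a0 s)) {s..t}"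
    and bound: "\<And>\<tau>. \<tau> \<ge> t0 \<Longrightarrow> \<tau> \<notin> N \<Longrightarrow> norm (U \<tau>) \<le> real CARD('n \<times> 'm) * (\<beta> + S)"
    and descent: "\<And>\<tau>. \<tau> \<ge> t0 \<Longrightarrow> \<tau> \<notin> N \<Longrightarrow>
           U \<tau> \<bullet> (M *v abar a a0 \<tau>) \<le> - (\<beta> - S) * norm (M *v abar a a0 \<tau>)"
    using estimator_error_dynamics[OF w_nonneg w_diag a0_deriv a0'_le \<open>0 \<le> S\<close> less_imp_le[OF \<open>S < \<beta>\<close>] sol]
    unfolding M_def by blast
  have "abar a a0 T = 0"
  proof (rule lyapunov_finite_time[OF sym rayleigh(2,3) _ rayleigh(4) _ N _ deriv bound descent])
    show "lambda_min M > 0" unfolding M_def by (rule lambda_min_Mmat_pos[OF w_diag w_sym w_nonneg p_nonneg A1])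
    show "\<beta> - S > 0" and "0 \<le> real CARD('n \<times> 'm) * (\<beta> + S)"
      using \<open>S < \<beta>\<close> \<open>0 \<le> S\<close> by simp_all
    show "T \<ge> t0 + sqrt (2 * lambda_max M * (1/2 * (abar a a0 t0 \<bullet> (M *v abar a a0 t0))))
                   / (lambda_min M * (\<beta> - S))"
      using T by (simp add: M_def Vfun_def)
  qed
  then show "a i T = a0 T" by (simp add: abar_eq_stack vec_eq_iff)
qed

theorem mainTheorem3:
  fixes w :: "'n::finite \<Rightarrow> 'n \<Rightarrow> real"
    and p :: "'n \<Rightarrow> real"
    and a0 a0' :: "real \<Rightarrow> real^'m::finite"
    and a :: "'n \<Rightarrow> real \<Rightarrow> real^'m"
    and \<beta> t0 :: real
  assumes w_sym: "\<And>i j. w i j = w j i"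
    and w_nonneg: "\<And>i j. w i j \<ge> 0"
    and w_diag: "\<And>i. w i i = 0"
    and p_nonneg: "\<And>i. p i \<ge> 0"
    and a0_deriv: "\<And>t. t \<ge> t0 \<Longrightarrow> (a0 has_vector_derivative a0' t) (at t within {t0..})"
    and a0'_cont: "continuous_on {t0..} a0'"
    and A1: "leader_reaches_all w p"
    and beta_pos: "\<beta> > 0"
    and A2_bdd: "bdd_above ((\<lambda>t. norm (a0' t)) ` {t0..})"
    and A2: "(SUP t\<in>{t0..}. norm (a0' t)) < \<beta>"
    and sol: "is_estimator_solution w p \<beta> t0 a0 a"
  shows "\<forall>t \<ge> t0 + sqrt (2 * lambda_max (Mmat w p :: real^('n \<times> 'm)^('n \<times> 'm)) * Vfun w p a a0 t0)
                    / (lambda_min (Mmat w p :: real^('n \<times> 'm)^('n \<times> 'm))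
                       * (\<beta> - (SUP t\<in>{t0..}. norm (a0' t)))).
           \<forall>i. a i t = a0 t"
proof -
  have a0'_le: "norm (a0' t) \<le> (SUP t\<in>{t0..}. norm (a0' t))" if "t \<ge> t0" for t
    using that A2_bdd by (intro cSUP_upper) auto
  show ?thesis
    using estimator_finite_time_convergence[OF w_sym w_nonneg w_diag p_nonneg a0_deriv A1 a0'_le A2 sol] .
qed

end
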